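(* Every finite monoid is sofic.
   Context: For a non-empty finite set $X$, $\mathrm{Map}(X)$ is the monoid of all maps $X\to X$ under composition (identity $\mathrm{Id}_X$) with the Hamming metric $d_X(f,g)=|\{x\in X : f(x)\ne g(x)\}|/|X|$. For a monoid $M$ with identity $1_M$, finite $K\subset M$ and $\varepsilon,\alpha>0$, a map $\varphi\colon M\to\mathrm{Map}(X)$ is a $(K,\varepsilon)$-morphism if $d_X(\varphi(k_1k_2),\varphi(k_1)\varphi(k_2))\le\varepsilon$ for all $k_1,k_2\in K$ and $d_X(\varphi(1_M),\mathrm{Id}_X)\le\varepsilon$; it is $(K,\alpha)$-injective if $d_X(\varphi(k_1),\varphi(k_2))\ge\alpha$ for all distinct $k_1,k_2\in K$. $M$ is sofic if for every finite $K\subset M$ and every $\varepsilon>0$ there exist a non-empty finite set $X$ and a $(K,1-\varepsilon)$-injective $(K,\varepsilon)$-morphism $\varphi\colon M\to\mathrm{Map}(X)$. *)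

theory Defs
  imports Complex_Main
begin

text \<open>Maps of a finite set X into itself are represented as functions nat => nat
  that send X into X; only their values on X matter (Hamming distance only looks at X).\<close>

definition is_map_on :: "nat set \<Rightarrow> (nat \<Rightarrow> nat) \<Rightarrow> bool" where
  "is_map_on X f \<longleftrightarrow> f ` X \<subseteq> X"

definition hamming :: "nat set \<Rightarrow> (nat \<Rightarrow> nat) \<Rightarrow> (nat \<Rightarrow> nat) \<Rightarrow> real" where
  "hamming X f g = real (card {x \<in> X. f x \<noteq> g x}) / real (card X)"

definition is_K_eps_morphism ::
    "'m::monoid_mult set \<Rightarrow> real \<Rightarrow> nat set \<Rightarrow> ('m \<Rightarrow> nat \<Rightarrow> nat) \<Rightarrow> bool" where
  "is_K_eps_morphism K \<epsilon> X \<phi> \<longleftrightarrow>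
     (\<forall>m. is_map_on X (\<phi> m)) \<and>
     (\<forall>k1\<in>K. \<forall>k2\<in>K. hamming X (\<phi> (k1 * k2)) (\<phi> k1 \<circ> \<phi> k2) \<le> \<epsilon>) \<and>
     hamming X (\<phi> 1) id \<le> \<epsilon>"

definition is_K_alpha_injective ::
    "'m set \<Rightarrow> real \<Rightarrow> nat set \<Rightarrow> ('m \<Rightarrow> nat \<Rightarrow> nat) \<Rightarrow> bool" where
  "is_K_alpha_injective K \<alpha> X \<phi> \<longleftrightarrow>
     (\<forall>k1\<in>K. \<forall>k2\<in>K. k1 \<noteq> k2 \<longrightarrow> hamming X (\<phi> k1) (\<phi> k2) \<ge> \<alpha>)"

definition sofic_monoid :: "'m::monoid_mult itself \<Rightarrow> bool" where
  "sofic_monoid _ \<longleftrightarrow>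
     (\<forall>(K::'m set) (\<epsilon>::real). finite K \<and> \<epsilon> > 0 \<longrightarrow>
        (\<exists>(X::nat set) (\<phi>::'m \<Rightarrow> nat \<Rightarrow> nat).
           finite X \<and> X \<noteq> {} \<and>
           is_K_alpha_injective K (1 - \<epsilon>) X \<phi> \<and> is_K_eps_morphism K \<epsilon> X \<phi>))"

end

theory Submission
  imports Defs
begin

text \<open>A finite monoid \<open>M\<close> with \<open>c\<close> elements acts faithfully and exactly on \<open>M\<^sup>n\<close> by left
  multiplication in every coordinate, which gives a genuine morphism into \<open>Map(M\<^sup>n)\<close>. Two
  distinct elements \<open>a \<noteq> b\<close> agree on a tuple only if they agree on every coordinate, and
  \<open>a x = b x\<close> fails for \<open>x = 1\<close>; so they agree on at most \<open>(c - 1)\<^sup>n\<close> of the \<open>c\<^sup>n\<close> tuples,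
  a proportion that tends to \<open>0\<close> as \<open>n\<close> grows.\<close>

lemma card_filter_add_card_filter_not:
  assumes "finite A"
  shows "card {x \<in> A. P x} + card {x \<in> A. \<not> P x} = card A"
proof -
  have "{x \<in> A. P x} \<union> {x \<in> A. \<not> P x} = A" by blast
  moreover have "{x \<in> A. P x} \<inter> {x \<in> A. \<not> P x} = {}" by blast
  ultimately show ?thesis
    using card_Un_disjoint[of "{x \<in> A. P x}" "{x \<in> A. \<not> P x}"] assms by simp
qed

lemma hamming_eq_zero:
  assumes "\<And>x. x \<in> X \<Longrightarrow> f x = g x"
  shows "hamming X f g = 0"
proof -
  have "{x \<in> X. f x \<noteq> g x} = {}" using assms by blast
  then show ?thesis unfolding hamming_def by (simp only: card.empty)
qed

locale nat_encoding =
  fixes T :: "'a set" and X :: "nat set" and g :: "'a \<Rightarrow> nat"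
  assumes bij: "bij_betw g T X"
begin

definition transport :: "('a \<Rightarrow> 'a) \<Rightarrow> nat \<Rightarrow> nat" where
  "transport F x = (if x \<in> X then g (F (inv_into T g x)) else x)"

lemma inv_into_mem: "x \<in> X \<Longrightarrow> inv_into T g x \<in> T"
  using bij by (metis bij_betw_def inv_into_into)

lemma transport_is_map_on: "F ` T \<subseteq> T \<Longrightarrow> is_map_on X (transport F)"
  unfolding is_map_on_def transport_def using inv_into_mem bij bij_betwE by fastforce

lemma transport_cong: "(\<And>t. t \<in> T \<Longrightarrow> F t = G t) \<Longrightarrow> transport F x = transport G x"
  unfolding transport_def using inv_into_mem by simp

lemma transport_comp:
  assumes "G ` T \<subseteq> T" and "x \<in> X"
  shows "transport F (transport G x) = transport (F \<circ> G) x"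
proof -
  have "G (inv_into T g x) \<in> T" using assms inv_into_mem by blast
  then show ?thesis
    unfolding transport_def using assms bij
    by (simp add: bij_betw_inv_into_left bij_betwE)
qed

lemma transport_id: "x \<in> X \<Longrightarrow> transport id x = x"
  unfolding transport_def using bij by (simp add: bij_betw_inv_into_right)

lemma transport_apply: "t \<in> T \<Longrightarrow> transport F (g t) = g (F t)"
  unfolding transport_def using bij by (simp add: bij_betw_inv_into_left bij_betwE)

lemma disagreement_transport:
  assumes "F ` T \<subseteq> T" and "G ` T \<subseteq> T"
  shows "{x \<in> X. transport F x \<noteq> transport G x} = g ` {t \<in> T. F t \<noteq> G t}"
proof -
  have "inj_on g T" using bij bij_betw_def by blast
  then have "transport F (g t) \<noteq> transport G (g t) \<longleftrightarrow> F t \<noteq> G t" if "t \<in> T" for t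
    using that assms by (simp add: transport_apply inj_on_eq_iff image_subset_iff)
  moreover have "X = g ` T" using bij by (simp add: bij_betw_def)
  ultimately show ?thesis by blast
qed

lemma hamming_transport:
  assumes "F ` T \<subseteq> T" and "G ` T \<subseteq> T"
  shows "hamming X (transport F) (transport G) = real (card {t \<in> T. F t \<noteq> G t}) / real (card T)"
proof -
  have "inj_on g T" using bij bij_betw_def by blast
  then have "card {x \<in> X. transport F x \<noteq> transport G x} = card {t \<in> T. F t \<noteq> G t}"
    unfolding disagreement_transport[OF assms] by (simp add: card_image inj_on_subset)
  then show ?thesis
    unfolding hamming_def using bij_betw_same_card[OF bij] by simp
qed

end

lemma sofic_approximation_of_action:
  fixes act :: "'m::monoid_mult \<Rightarrow> 'a \<Rightarrow> 'a"
  assumes fin: "finite T" and ne: "T \<noteq> {}"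
    and act_closed: "\<And>m. act m ` T \<subseteq> T"
    and act_mult: "\<And>a b t. t \<in> T \<Longrightarrow> act (a * b) t = act a (act b t)"
    and act_one: "\<And>t. t \<in> T \<Longrightarrow> act 1 t = t"
    and rare_agreement: "\<And>a b. a \<in> K \<Longrightarrow> b \<in> K \<Longrightarrow> a \<noteq> b \<Longrightarrow>
           real (card {t \<in> T. act a t = act b t}) \<le> \<epsilon> * real (card T)"
    and "\<epsilon> \<ge> 0"
  shows "\<exists>(X::nat set) (\<phi>::'m \<Rightarrow> nat \<Rightarrow> nat).
           finite X \<and> X \<noteq> {} \<and> is_K_alpha_injective K (1 - \<epsilon>) X \<phi> \<and> is_K_eps_morphism K \<epsilon> X \<phi>"
proof -
  obtain g where "bij_betw g T {0..<card T}"
    using ex_bij_betw_finite_nat[OF fin] by blast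
  then interpret nat_encoding T "{0..<card T}" g by unfold_locales
  define \<phi> where "\<phi> m = transport (act m)" for m
  have card_pos: "card T > 0" using fin ne by (simp add: card_gt_0_iff)
  have "is_K_alpha_injective K (1 - \<epsilon>) {0..<card T} \<phi>"
    unfolding is_K_alpha_injective_def
  proof (intro ballI impI)
    fix a b assume "a \<in> K" "b \<in> K" "a \<noteq> b"
    have "real (card {t \<in> T. act a t = act b t}) + real (card {t \<in> T. act a t \<noteq> act b t})
        = real (card T)"
      using card_filter_add_card_filter_not[OF fin, of "\<lambda>t. act a t = act b t"] of_nat_add by metis
    then have "real (card T) - real (card {t \<in> T. act a t \<noteq> act b t}) \<le> \<epsilon> * real (card T)"
      using rare_agreement[OF \<open>a \<in> K\<close> \<open>b \<in> K\<close> \<open>a \<noteq> b\<close>] by linarith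
    then show "hamming {0..<card T} (\<phi> a) (\<phi> b) \<ge> 1 - \<epsilon>"
      unfolding \<phi>_def hamming_transport[OF act_closed act_closed]
      using card_pos by (simp add: field_simps)
  qed
  moreover have "is_K_eps_morphism K \<epsilon> {0..<card T} \<phi>"
  proof -
    have "\<phi> (a * b) x = (\<phi> a \<circ> \<phi> b) x" if "x \<in> {0..<card T}" for a b x
    proof -
      have "transport (act (a * b)) x = transport (act a \<circ> act b) x"
        using act_mult by (intro transport_cong) simp
      then show ?thesis
        unfolding \<phi>_def using transport_comp[OF act_closed that] by simp
    qed
    moreover have "\<phi> 1 x = id x" if "x \<in> {0..<card T}" for x
    proof -
      have "transport (act 1) x = transport id x"
        using act_one by (intro transport_cong) simp
      then show ?thesis unfolding \<phi>_def using transport_id[OF that] by simp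
    qed
    ultimately have "hamming {0..<card T} (\<phi> (a * b)) (\<phi> a \<circ> \<phi> b) = 0"
        and "hamming {0..<card T} (\<phi> 1) id = 0" for a b
      by (auto intro!: hamming_eq_zero)
    moreover have "is_map_on {0..<card T} (\<phi> m)" for m
      unfolding \<phi>_def using transport_is_map_on[OF act_closed] .
    ultimately show ?thesis
      unfolding is_K_eps_morphism_def using \<open>\<epsilon> \<ge> 0\<close> by simp
  qed
  moreover have "finite {0..<card T}" "{0..<card T} \<noteq> {}" using card_pos by auto
  ultimately show ?thesis by blast
qed

lemma card_lists_length_UNIV: "card {xs :: 'a list. length xs = n} = card (UNIV :: 'a::finite set) ^ n"
  using card_lists_length_eq[of "UNIV :: 'a set" n] by simp

lemma card_agreeing_lists_le:
  fixes a b :: "'m::{monoid_mult, finite}"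
  assumes "a \<noteq> b"
  shows "card {xs. length xs = n \<and> map ((*) a) xs = map ((*) b) xs} \<le> (card (UNIV :: 'm set) - 1) ^ n"
proof -
  define A where "A = {x. a * x = b * x}"
  have "{xs. length xs = n \<and> map ((*) a) xs = map ((*) b) xs} = {xs. set xs \<subseteq> A \<and> length xs = n}"
    unfolding A_def by (auto simp: map_eq_conv)
  then have "card {xs. length xs = n \<and> map ((*) a) xs = map ((*) b) xs} = card A ^ n"
    by (simp add: card_lists_length_eq)
  moreover have "card A \<le> card (UNIV :: 'm set) - 1"
  proof -
    have "A \<subseteq> UNIV - {1}" using assms unfolding A_def by auto
    then have "card A \<le> card (UNIV - {1 :: 'm})" by (intro card_mono) auto
    then show ?thesis by (simp add: card_Diff_singleton)
  qed
  ultimately show ?thesis by (simp add: power_mono)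
qed

lemma agreeing_lists_proportion_le:
  fixes a b :: "'m::{monoid_mult, finite}"
  assumes "a \<noteq> b"
  defines "c \<equiv> real (card (UNIV :: 'm set))"
  shows "real (card {xs. length xs = n \<and> map ((*) a) xs = map ((*) b) xs})
           \<le> ((c - 1) / c) ^ n * real (card {xs :: 'm list. length xs = n})"
proof -
  have "real (card {xs. length xs = n \<and> map ((*) a) xs = map ((*) b) xs}) \<le> (c - 1) ^ n"
  proof -
    have "card (UNIV :: 'm set) \<ge> 1" by (simp add: Suc_leI finite_UNIV_card_ge_0)
    then have "real (card (UNIV :: 'm set) - 1) = c - 1" unfolding c_def by (simp add: of_nat_diff)
    then show ?thesis
      using card_agreeing_lists_le[OF assms(1), of n] by (metis of_nat_le_iff of_nat_power)
  qed
  also have "\<dots> = ((c - 1) / c) ^ n * c ^ n"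
    unfolding c_def by (simp add: power_divide)
  also have "\<dots> = ((c - 1) / c) ^ n * real (card {xs :: 'm list. length xs = n})"
    unfolding card_lists_length_UNIV c_def by simp
  finally show ?thesis .
qed

theorem proposition4p1:
  shows "sofic_monoid TYPE('m::{monoid_mult, finite})"
  unfolding sofic_monoid_def
proof (intro allI impI, elim conjE)
  fix K :: "'m set" and \<epsilon> :: real
  assume "\<epsilon> > 0"
  define c where "c = real (card (UNIV :: 'm set))"
  have "c > 0" unfolding c_def by (simp add: finite_UNIV_card_ge_0)
  then obtain n where n: "((c - 1) / c) ^ n < \<epsilon>"
    using real_arch_pow_inv[OF \<open>\<epsilon> > 0\<close>, of "(c - 1) / c"] by auto
  let ?T = "{xs :: 'm list. length xs = n}"
  have "replicate n 1 \<in> ?T" by simp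
  then have "?T \<noteq> {}" by blast
  moreover have "finite ?T" using finite_lists_length_eq[of "UNIV :: 'm set"] by simp
  moreover have "map ((*) m) ` ?T \<subseteq> ?T" for m by auto
  moreover have "map ((*) (a * b)) xs = map ((*) a) (map ((*) b) xs)" for a b :: 'm and xs
    by (simp add: mult.assoc)
  moreover have "map ((*) 1) xs = xs" for xs :: "'m list" by (intro map_idI) simp
  moreover have "real (card {xs \<in> ?T. map ((*) a) xs = map ((*) b) xs}) \<le> \<epsilon> * real (card ?T)"
    if "a \<noteq> b" for a b
  proof -
    have "real (card {xs \<in> ?T. map ((*) a) xs = map ((*) b) xs}) \<le> ((c - 1) / c) ^ n * real (card ?T)"
      using agreeing_lists_proportion_le[OF that, of n] unfolding c_def by simp
    also have "\<dots> \<le> \<epsilon> * real (card ?T)"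
      using n by (intro mult_right_mono) auto
    finally show ?thesis .
  qed
  ultimately show "\<exists>(X::nat set) (\<phi>::'m \<Rightarrow> nat \<Rightarrow> nat).
      finite X \<and> X \<noteq> {} \<and> is_K_alpha_injective K (1 - \<epsilon>) X \<phi> \<and> is_K_eps_morphism K \<epsilon> X \<phi>"
    using sofic_approximation_of_action[of ?T "\<lambda>m. map ((*) m)" K \<epsilon>] \<open>\<epsilon> > 0\<close> by simp
qed

end
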